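(* For all non-negative integers $n$ and positive integers $k,m$, $$\det\Big(D_{2n+2j-2i}^{(2k+2m-1)}\Big)_{0\le i,j\le k-1}=(-1)^{km}\det\Big(D_{-2n-2j+2i-2k-2m}^{(2k+2m-1)}\Big)_{0\le i,j\le m-1}.$$
   Context: For $N\ge0$ and $0\le r,s\le K$, $C_N^{(K)}(r\to s)$ is the number of lattice paths with steps $(1,1),(1,-1)$ from $(0,r)$ to $(N,s)$ never below the $x$-axis nor above $y=K$. For odd $K$, $F(x)=\sum_{N\ge0}C_N^{(K)}(r\to s)x^N$ is rational $p/q$ with $\deg p<\deg q$, $q(0)\ne0$, and for negative $N$, $C_N^{(K)}(r\to s)$ is defined by $\sum_{N\ge1}C_{-N}^{(K)}(r\to s)x^N=-F(1/x)$ (equivalently by running the linear recurrence backwards); thus $C_N^{(K)}(r\to s)$ is defined for all integers $N$, and equals the path count for $N\ge0$. For all integers $n$, $D_{2n}^{(K)}:=C_{2n+K}^{(K)}(0\to K)$. *)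

theory Defs
  imports "HOL-Computational_Algebra.Polynomial_FPS" "Jordan_Normal_Form.Determinant"
begin

text \<open>A path is encoded by its list of vertical steps ws (each +1 or -1);
  the height after i steps is r + sum of the first i steps.\<close>
definition path_count :: "int \<Rightarrow> nat \<Rightarrow> int \<Rightarrow> int \<Rightarrow> nat" where
  "path_count K N r s = card {ws :: int list. length ws = N \<and> set ws \<subseteq> {1, -1} \<and>
      (\<forall>i\<le>N. 0 \<le> r + sum_list (take i ws) \<and> r + sum_list (take i ws) \<le> K) \<and>
      r + sum_list ws = s}"

definition path_gf :: "int \<Rightarrow> int \<Rightarrow> int \<Rightarrow> real fps" where
  "path_gf K r s = Abs_fps (\<lambda>N. real (path_count K N r s))"

definition gf_rep :: "int \<Rightarrow> int \<Rightarrow> int \<Rightarrow> real poly \<times> real poly" where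
  "gf_rep K r s = (SOME (p, q). poly q 0 \<noteq> 0 \<and> degree p < degree q \<and>
      path_gf K r s * fps_of_poly q = fps_of_poly p)"

text \<open>The power series -F(1/x) = - (x^(deg q - deg p) * reflect p) / reflect q,
  i.e. -p(1/x)/q(1/x) with numerator and denominator multiplied by x^(deg q).\<close>
definition neg_gf :: "int \<Rightarrow> int \<Rightarrow> int \<Rightarrow> real fps" where
  "neg_gf K r s = (case gf_rep K r s of (p, q) \<Rightarrow>
      - fps_of_poly (monom 1 (degree q - degree p) * reflect_poly p) / fps_of_poly (reflect_poly q))"

definition C :: "int \<Rightarrow> int \<Rightarrow> int \<Rightarrow> int \<Rightarrow> real" where
  "C K N r s = (if 0 \<le> N then real (path_count K (nat N) r s)
                else fps_nth (neg_gf K r s) (nat (- N)))"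

text \<open>D_{2n}^{(K)} := C_{2n+K}^{(K)}(0 \<rightarrow> K); the argument n here is half the subscript.\<close>
definition D :: "int \<Rightarrow> int \<Rightarrow> real" where
  "D K n = C K (2 * n + K) 0 K"

end

theory Submission
  imports Defs
begin

text \<open>Paths of odd length \<open>2t + 1\<close> from height \<open>0\<close> to an odd height of the strip of width
  \<open>K = 2L - 1\<close> are counted by the entries of \<open>G ^ t\<close>, where the two-step transfer matrix
  \<open>G = M M\<^sup>T\<close> on the \<open>L\<close> odd heights has a unit bidiagonal factor \<open>M\<close>, so \<open>det G = 1\<close>.
  In particular \<open>D\<^sub>2\<^sub>t\<close>, the number of paths of length \<open>2t + K\<close> from \<open>0\<close> to \<open>K\<close>, is the
  corner entry \<open>(0, L - 1)\<close> of \<open>G ^ (t + L - 1)\<close>. The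
  triangular shape of the first rows and last columns of the powers of \<open>G\<close> yields a linear
  recurrence for these corner entries with nonzero trailing coefficient; the extension of \<open>C\<close>
  to negative lengths through \<open>-F(1/x)\<close> is the backward continuation of that recurrence, so it
  is given by the corner entries of negative powers of \<open>G\<close>. The same triangularity factors
  both Toeplitz determinants through unitriangular matrices, turning them into complementary
  minors of \<open>G ^ (n + m)\<close> and its inverse, and Jacobi's complementary minor theorem
  finishes the proof.\<close>

section \<open>Linear recurrences and the extension to negative indices\<close>

definition lin_rec :: "nat \<Rightarrow> (nat \<Rightarrow> real) \<Rightarrow> (int \<Rightarrow> real) \<Rightarrow> bool" where
  "lin_rec d g c \<longleftrightarrow> (\<forall>N. c (N + int d) = (\<Sum>j<d. g j * c (N + int j)))"

lemma lin_rec_zero_backwards: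
  assumes rec: "lin_rec d g r" and d: "0 < d" and g0: "g 0 \<noteq> 0"
    and zero: "\<And>N. N0 \<le> N \<Longrightarrow> r N = 0"
  shows "r N = 0"
proof -
  have "\<forall>N. N0 - int k \<le> N \<longrightarrow> r N = 0" for k
  proof (induction k)
    case 0
    then show ?case using zero by simp
  next
    case (Suc k)
    show ?case
    proof (intro allI impI)
      fix N assume N: "N0 - int (Suc k) \<le> N"
      show "r N = 0"
      proof (cases "N0 - int k \<le> N")
        case True
        then show ?thesis using Suc by blast
      next
        case False
        then have N_eq: "N = N0 - int k - 1" using N by simp
        have "(\<Sum>j<d. g j * r (N + int j)) = (\<Sum>j<d. if j = 0 then g 0 * r N else 0)"
          by (rule sum.cong) (use Suc N_eq in auto)
        also have "\<dots> = g 0 * r N" using d by (simp add: sum.delta)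
        finally have "g 0 * r N = r (N + int d)" using rec by (simp add: lin_rec_def)
        also have "\<dots> = 0" using Suc d N_eq by simp
        finally show ?thesis using g0 by simp
      qed
    qed
  qed
  moreover have "N0 - int (nat (N0 - N)) \<le> N" by (cases "N0 \<le> N") auto
  ultimately show ?thesis by blast
qed

definition rec_denom :: "nat \<Rightarrow> (nat \<Rightarrow> real) \<Rightarrow> real poly" where
  "rec_denom d g = 1 - (\<Sum>j<d. monom (g j) (d - j))"

lemma coeff_rec_denom:
  "coeff (rec_denom d g) i = (if i = 0 then 1 else if i \<le> d then - g (d - i) else 0)"
proof -
  have "(\<Sum>j<d. if d - j = i then g j else 0) = (\<Sum>j<d. if j = d - i \<and> 1 \<le> i \<and> i \<le> d then g j else 0)"
    by (rule sum.cong) auto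
  also have "\<dots> = (if 1 \<le> i \<and> i \<le> d then g (d - i) else 0)"
    by (cases "1 \<le> i \<and> i \<le> d") (auto simp: sum.delta)
  finally show ?thesis by (auto simp: rec_denom_def coeff_sum)
qed

lemma degree_rec_denom:
  assumes "0 < d" "g 0 \<noteq> 0"
  shows "degree (rec_denom d g) = d"
proof (rule antisym)
  show "degree (rec_denom d g) \<le> d" by (rule degree_le) (auto simp: coeff_rec_denom)
  show "d \<le> degree (rec_denom d g)" by (rule le_degree) (use assms in \<open>auto simp: coeff_rec_denom\<close>)
qed

lemma gf_times_rec_denom_nth:
  assumes rec: "lin_rec d g c" and i: "d \<le> i"
  shows "fps_nth (Abs_fps (\<lambda>n. c (int n)) * fps_of_poly (rec_denom d g)) i = 0"
proof -
  have "fps_nth (Abs_fps (\<lambda>n. c (int n)) * fps_of_poly (rec_denom d g)) i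
      = (\<Sum>t=0..i. coeff (rec_denom d g) t * c (int (i - t)))"
    by (simp add: mult.commute[of "Abs_fps _"] fps_mult_nth)
  also have "\<dots> = (\<Sum>t=0..i. (if t = 0 then c (int i) else 0)
                 - (if t \<in> {1..d} then g (d - t) * c (int i - int t) else 0))"
    by (rule sum.cong) (use i in \<open>auto simp: coeff_rec_denom of_nat_diff\<close>)
  also have "\<dots> = c (int i) - (\<Sum>t\<in>{0..i} \<inter> {1..d}. g (d - t) * c (int i - int t))"
    by (simp only: sum_subtractf sum.inter_restrict[symmetric] finite_atLeastAtMost) simp
  also have "{0..i} \<inter> {1..d} = {1..d}" using i by auto
  also have "(\<Sum>t\<in>{1..d}. g (d - t) * c (int i - int t)) = (\<Sum>j<d. g j * c (int i - int d + int j))"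
    by (rule sum.reindex_bij_witness[of _ "\<lambda>j. d - j" "\<lambda>t. d - t"]) (auto simp: of_nat_diff)
  also have "\<dots> = c (int i)" using rec[unfolded lin_rec_def, rule_format, of "int i - int d"] by simp
  finally show ?thesis by simp
qed

lemma lin_rec_gf_rational:
  assumes rec: "lin_rec d g c" and d: "0 < d" and g0: "g 0 \<noteq> 0"
  shows "\<exists>p q. poly q 0 \<noteq> 0 \<and> degree p < degree q \<and>
     Abs_fps (\<lambda>n. c (int n)) * fps_of_poly q = fps_of_poly p"
proof -
  define q where "q = rec_denom d g"
  define F where "F = Abs_fps (\<lambda>n. c (int n))"
  define p where "p = (\<Sum>i<d. monom (fps_nth (F * fps_of_poly q) i) i)"
  have coeff_p: "coeff p i = (if i < d then fps_nth (F * fps_of_poly q) i else 0)" for i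
    unfolding p_def by (auto simp: coeff_sum coeff_monom sum.delta)
  have "degree p \<le> d - 1" by (rule degree_le) (use d in \<open>auto simp: coeff_p\<close>)
  then have "degree p < degree q" unfolding q_def using degree_rec_denom d g0 by simp
  moreover have "poly q 0 \<noteq> 0" unfolding q_def by (simp add: poly_0_coeff_0 coeff_rec_denom)
  moreover have "F * fps_of_poly q = fps_of_poly p"
    by (rule fps_ext) (use gf_times_rec_denom_nth[OF rec] in \<open>auto simp: coeff_p q_def F_def\<close>)
  ultimately show ?thesis unfolding F_def by blast
qed

text \<open>The convolution with \<open>q\<close> solves the same recurrence and vanishes from \<open>degree q\<close> on,
  because \<open>degree p < degree q\<close>; running the recurrence backwards it vanishes everywhere.\<close>

lemma lin_rec_denom_conv_zero:
  assumes rec: "lin_rec d g c" and d: "0 < d" and g0: "g 0 \<noteq> 0"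
    and dpq: "degree p < degree q"
    and Fpq: "Abs_fps (\<lambda>n. c (int n)) * fps_of_poly q = fps_of_poly p"
  shows "(\<Sum>t\<le>degree q. coeff q t * c (N - int t)) = 0"
proof -
  define r where "r N = (\<Sum>t\<le>degree q. coeff q t * c (N - int t))" for N
  have rec_r: "lin_rec d g r"
    unfolding lin_rec_def
  proof
    fix N
    have shifted: "c (N + int d - int t) = (\<Sum>j<d. g j * c (N + int j - int t))" for t
      using rec[unfolded lin_rec_def, rule_format, of "N - int t"] by (simp add: algebra_simps)
    have "r (N + int d) = (\<Sum>t\<le>degree q. \<Sum>j<d. coeff q t * (g j * c (N + int j - int t)))"
      unfolding r_def shifted by (simp add: sum_distrib_left)
    also have "\<dots> = (\<Sum>j<d. \<Sum>t\<le>degree q. g j * (coeff q t * c (N + int j - int t)))"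
      by (subst sum.swap) (simp add: algebra_simps)
    also have "\<dots> = (\<Sum>j<d. g j * r (N + int j))"
      by (simp add: r_def sum_distrib_left)
    finally show "r (N + int d) = (\<Sum>j<d. g j * r (N + int j))" .
  qed
  have zero_r: "r N = 0" if N: "int (degree q) \<le> N" for N
  proof -
    obtain n where "N = int n" using N nonneg_int_cases[of N] by fastforce
    with N have n: "N = int n" "degree q \<le> n" by auto
    have "0 = coeff p n" using n dpq by (simp add: coeff_eq_0)
    also have "\<dots> = fps_nth (fps_of_poly q * Abs_fps (\<lambda>n. c (int n))) n"
      using Fpq by (simp add: mult.commute)
    also have "\<dots> = (\<Sum>t=0..n. coeff q t * c (int (n - t)))" by (simp add: fps_mult_nth)
    also have "\<dots> = (\<Sum>t\<le>degree q. coeff q t * c (int (n - t)))"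
      by (rule sum.mono_neutral_right) (use n in \<open>auto simp: coeff_eq_0\<close>)
    also have "\<dots> = r N" unfolding r_def n by (rule sum.cong) (use n in \<open>auto simp: of_nat_diff\<close>)
    finally show ?thesis by simp
  qed
  show ?thesis using lin_rec_zero_backwards[OF rec_r d g0 zero_r] unfolding r_def .
qed

text \<open>For \<open>G = \<Sum>M\<ge>1. c(-M) x\<^sup>M\<close> this is \<open>G = -F(1/x)\<close>, after multiplying by \<open>x ^ degree q\<close>.\<close>

lemma reflected_gf_identity:
  fixes c :: "int \<Rightarrow> real"
  assumes conv: "\<And>N. (\<Sum>t\<le>degree q. coeff q t * c (N - int t)) = 0"
    and dpq: "degree p < degree q"
    and Fpq: "Abs_fps (\<lambda>n. c (int n)) * fps_of_poly q = fps_of_poly p"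
  shows "Abs_fps (\<lambda>M. if M = 0 then 0 else c (- int M)) * fps_of_poly (reflect_poly q)
       = - fps_of_poly (monom 1 (degree q - degree p) * reflect_poly p)"
proof (rule fps_ext)
  fix M
  define dq where "dq = degree q"
  define dp where "dp = degree p"
  define f where "f t = coeff q (dq - t) * c (int t - int M)" for t
  have "fps_nth (Abs_fps (\<lambda>M. if M = 0 then 0 else c (- int M)) * fps_of_poly (reflect_poly q)) M
      = (\<Sum>t=0..M. if t \<in> {..dq} \<inter> {..<M} then f t else 0)"
    unfolding mult.commute[of "Abs_fps _"] fps_mult_nth f_def
    by (rule sum.cong) (auto simp: coeff_reflect_poly dq_def of_nat_diff)
  also have "\<dots> = sum f ({0..M} \<inter> ({..dq} \<inter> {..<M}))"
    by (rule sum.inter_restrict[symmetric]) simp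
  also have "\<dots> = sum f ({..dq} \<inter> {..<M})" by (rule arg_cong[where f = "sum f"]) auto
  also have "\<dots> = - sum f ({..dq} - {..<M})"
  proof -
    have "0 = (\<Sum>s\<le>dq. coeff q s * c (int dq - int M - int s))" using conv dq_def by simp
    also have "\<dots> = sum f {..dq}" unfolding f_def
      by (rule sum.reindex_bij_witness[of _ "\<lambda>t. dq - t" "\<lambda>s. dq - s"]) (auto simp: of_nat_diff algebra_simps)
    also have "\<dots> = sum f ({..dq} \<inter> {..<M}) + sum f ({..dq} - {..<M})"
      by (rule sum.Int_Diff) simp
    finally show ?thesis by (metis add_eq_0_iff2)
  qed
  also have "sum f ({..dq} - {..<M}) = (if M \<le> dq then coeff p (dq - M) else 0)"
  proof (cases "M \<le> dq")
    case True
    have "coeff p (dq - M) = fps_nth (Abs_fps (\<lambda>n. c (int n)) * fps_of_poly q) (dq - M)"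
      using Fpq by simp
    also have "\<dots> = sum f ({..dq} - {..<M})"
      unfolding f_def fps_mult_nth
      by (rule sum.reindex_bij_witness[of _ "\<lambda>t. t - M" "\<lambda>l. l + M"])
         (use True in \<open>auto simp: of_nat_diff add.commute\<close>)
    finally show ?thesis using True by simp
  next
    case False
    then have "{..dq} - {..<M} = {}" by auto
    then show ?thesis using False by (simp only: sum.empty) simp
  qed
  also have "- (if M \<le> dq then coeff p (dq - M) else 0)
      = fps_nth (- fps_of_poly (monom 1 (dq - dp) * reflect_poly p)) M"
  proof -
    have "dp < dq" using dpq unfolding dp_def dq_def .
    moreover have "M < dq - dp \<Longrightarrow> coeff p (dq - M) = 0"
      by (rule coeff_eq_0) (simp add: dp_def)
    ultimately show ?thesis
      by (auto simp: coeff_monom_mult coeff_reflect_poly dp_def)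
  qed
  finally show "fps_nth (Abs_fps (\<lambda>M. if M = 0 then 0 else c (- int M)) * fps_of_poly (reflect_poly q)) M
      = fps_nth (- fps_of_poly (monom 1 (degree q - degree p) * reflect_poly p)) M"
    unfolding dq_def dp_def .
qed

lemma lin_rec_neg_gf_nth:
  assumes rec: "lin_rec d g c" and d: "0 < d" and g0: "g 0 \<noteq> 0"
    and q0: "poly q 0 \<noteq> 0" and dpq: "degree p < degree q"
    and Fpq: "Abs_fps (\<lambda>n. c (int n)) * fps_of_poly q = fps_of_poly p"
    and M: "1 \<le> M"
  shows "fps_nth (- fps_of_poly (monom 1 (degree q - degree p) * reflect_poly p)
                    / fps_of_poly (reflect_poly q)) M = c (- int M)"
proof -
  have "fps_nth (fps_of_poly (reflect_poly q)) 0 \<noteq> 0"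
    using q0 by (auto simp: coeff_0_reflect_poly)
  then have "fps_of_poly (reflect_poly q) \<noteq> 0" by auto
  then have "- fps_of_poly (monom 1 (degree q - degree p) * reflect_poly p) / fps_of_poly (reflect_poly q)
      = Abs_fps (\<lambda>M. if M = 0 then 0 else c (- int M))"
    using reflected_gf_identity[OF lin_rec_denom_conv_zero[OF rec d g0 dpq Fpq] dpq Fpq]
    by (metis fps_divide_times_eq)
  then show ?thesis using M by simp
qed

lemma C_eq_lin_rec_extension:
  assumes rec: "lin_rec d g c" and d: "0 < d" and g0: "g 0 \<noteq> 0"
    and nonneg: "\<And>n. c (int n) = real (path_count K n r s)"
  shows "C K N r s = c N"
proof (cases "0 \<le> N")
  case True
  then show ?thesis unfolding C_def using nonneg[of "nat N"] by simp
next
  case False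
  have gf: "path_gf K r s = Abs_fps (\<lambda>n. c (int n))"
    unfolding path_gf_def using nonneg by simp
  define P where "P = (\<lambda>(p, q). poly q 0 \<noteq> 0 \<and> degree p < degree q \<and>
      path_gf K r s * fps_of_poly q = fps_of_poly (p :: real poly))"
  have "\<exists>x. P x" using lin_rec_gf_rational[OF rec d g0] unfolding P_def gf by auto
  moreover obtain p q where pq: "gf_rep K r s = (p, q)" by fastforce
  moreover have "gf_rep K r s = (SOME x. P x)" unfolding gf_rep_def P_def ..
  ultimately have "P (p, q)" by (metis someI_ex)
  then have q0: "poly q 0 \<noteq> 0" and dpq: "degree p < degree q"
    and F: "Abs_fps (\<lambda>n. c (int n)) * fps_of_poly q = fps_of_poly p"
    unfolding P_def gf by auto
  have "C K N r s = fps_nth (neg_gf K r s) (nat (- N))" unfolding C_def using False by simp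
  also have "\<dots> = c (- int (nat (- N)))"
    unfolding neg_gf_def pq prod.case by (rule lin_rec_neg_gf_nth[OF rec d g0 q0 dpq F]) (use False in simp)
  finally show ?thesis using False by simp
qed

section \<open>Paths in a strip\<close>

definition strip_paths :: "int \<Rightarrow> nat \<Rightarrow> int \<Rightarrow> int \<Rightarrow> int list set" where
  "strip_paths K N r s = {ws :: int list. length ws = N \<and> set ws \<subseteq> {1, -1} \<and>
      (\<forall>i\<le>N. 0 \<le> r + sum_list (take i ws) \<and> r + sum_list (take i ws) \<le> K) \<and>
      r + sum_list ws = s}"

lemma path_count_eq_card: "path_count K N r s = card (strip_paths K N r s)"
  unfolding path_count_def strip_paths_def ..

lemma finite_strip_paths: "finite (strip_paths K N r s)"
proof (rule finite_subset)
  show "strip_paths K N r s \<subseteq> {ws. set ws \<subseteq> {1, -1} \<and> length ws = N}"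
    unfolding strip_paths_def by auto
  show "finite {ws. set ws \<subseteq> {1, -1::int} \<and> length ws = N}"
    by (rule finite_lists_length_eq) simp
qed

lemma path_count_0: "path_count K 0 r s = (if s = r \<and> 0 \<le> r \<and> r \<le> K then 1 else 0)"
proof -
  have "strip_paths K 0 r s = (if s = r \<and> 0 \<le> r \<and> r \<le> K then {[]} else {})"
    unfolding strip_paths_def by auto
  then show ?thesis unfolding path_count_eq_card by simp
qed

lemma strip_paths_outside:
  assumes "\<not> (0 \<le> s \<and> s \<le> K)"
  shows "strip_paths K N r s = {}"
  using assms unfolding strip_paths_def by (force dest: spec[of _ N])

lemma snoc_in_strip_paths_iff:
  "ws @ [x] \<in> strip_paths K (Suc N) r s \<longleftrightarrow>
     x \<in> {1, -1} \<and> ws \<in> strip_paths K N r (s - x) \<and> 0 \<le> s \<and> s \<le> K"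
proof (cases "length ws = N")
  case True
  define inside where "inside l \<longleftrightarrow> 0 \<le> r + sum_list l \<and> r + sum_list l \<le> K" for l
  have "(\<forall>i\<le>Suc N. inside (take i (ws @ [x]))) \<longleftrightarrow> (\<forall>i\<le>N. inside (take i ws)) \<and> inside (ws @ [x])"
  proof -
    have "take i (ws @ [x]) = take i ws" if "i \<le> N" for i using that True by simp
    moreover have "take (Suc N) (ws @ [x]) = ws @ [x]" using True by simp
    ultimately show ?thesis by (metis le_Suc_eq)
  qed
  then show ?thesis using True unfolding strip_paths_def inside_def by (auto simp: algebra_simps)
next
  case False
  then show ?thesis unfolding strip_paths_def by simp
qed

lemma strip_paths_Suc:
  assumes "0 \<le> s" "s \<le> K"
  shows "strip_paths K (Suc N) r s
       = (\<lambda>ws. ws @ [1]) ` strip_paths K N r (s - 1) \<union> (\<lambda>ws. ws @ [-1]) ` strip_paths K N r (s + 1)"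
proof (intro equalityI subsetI)
  fix ws assume ws: "ws \<in> strip_paths K (Suc N) r s"
  then have "length ws = Suc N" unfolding strip_paths_def by auto
  then obtain ws' x where "ws = ws' @ [x]" by (auto simp: length_Suc_conv_rev)
  with ws show "ws \<in> (\<lambda>ws. ws @ [1]) ` strip_paths K N r (s - 1) \<union> (\<lambda>ws. ws @ [-1]) ` strip_paths K N r (s + 1)"
    by (auto simp: snoc_in_strip_paths_iff)
qed (use assms in \<open>auto simp: snoc_in_strip_paths_iff\<close>)

lemma path_count_outside:
  "\<not> (0 \<le> s \<and> s \<le> K) \<Longrightarrow> path_count K N r s = 0"
  unfolding path_count_eq_card using strip_paths_outside by simp

lemma path_count_Suc:
  "path_count K (Suc N) r s =
     (if 0 \<le> s \<and> s \<le> K then path_count K N r (s - 1) + path_count K N r (s + 1) else 0)"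
proof (cases "0 \<le> s \<and> s \<le> K")
  case True
  let ?up = "(\<lambda>ws. ws @ [1]) ` strip_paths K N r (s - 1)"
  let ?down = "(\<lambda>ws. ws @ [-1]) ` strip_paths K N r (s + 1)"
  have "card (?up \<union> ?down) = card ?up + card ?down"
    by (rule card_Un_disjoint) (auto simp: finite_strip_paths)
  also have "\<dots> = card (strip_paths K N r (s - 1)) + card (strip_paths K N r (s + 1))"
    by (simp add: card_image inj_on_def)
  finally show ?thesis using True strip_paths_Suc[of s K N r] by (simp add: path_count_eq_card)
next
  case False
  then show ?thesis using path_count_outside[of s K "Suc N" r] by auto
qed

lemma path_count_parity: "odd (int N + s) \<Longrightarrow> path_count K N 0 s = 0"
proof (induction N arbitrary: s)
  case 0
  then show ?case by (auto simp: path_count_0)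
next
  case (Suc N)
  have "odd (int N + (s - 1))" "odd (int N + (s + 1))" using Suc.prems by auto
  then show ?case using Suc.IH by (simp add: path_count_Suc)
qed

section \<open>The two-step transfer matrix\<close>

lemma index_mult_mat_sum:
  assumes "A \<in> carrier_mat n k" "B \<in> carrier_mat k l" "i < n" "j < l"
  shows "(A * B) $$ (i, j) = (\<Sum>r<k. A $$ (i, r) * B $$ (r, j))"
  using assms by (simp add: scalar_prod_def atLeast0LessThan)

lemma pow_mat_Suc_left:
  assumes "A \<in> carrier_mat n n"
  shows "A ^\<^sub>m Suc k = A * A ^\<^sub>m k"
proof (induction k)
  case 0
  then show ?case using assms by simp
next
  case (Suc k)
  have "A ^\<^sub>m Suc (Suc k) = (A * A ^\<^sub>m k) * A" using Suc by simp
  also have "\<dots> = A * (A ^\<^sub>m k * A)" using assms by (simp add: assoc_mult_mat[of _ n n _ n _ n])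
  finally show ?case by simp
qed

lemma det_unit_lower_triangular:
  assumes A: "A \<in> carrier_mat n n"
    and upper_zero: "\<And>i j. i < j \<Longrightarrow> j < n \<Longrightarrow> A $$ (i, j) = 0"
    and diag_one: "\<And>i. i < n \<Longrightarrow> A $$ (i, i) = 1"
  shows "det A = 1"
proof -
  have "det A = prod_list (diag_mat A)" by (rule det_lower_triangular[OF upper_zero A])
  also have "\<dots> = (\<Prod>i = 0..<n. A $$ (i, i))" using A by (simp add: prod_list_diag_prod)
  also have "\<dots> = 1" by (rule prod.neutral) (auto simp: diag_one)
  finally show ?thesis .
qed

text \<open>Index \<open>q < L\<close> stands for the odd height \<open>2L - 1 - 2q\<close> of the strip of width
  \<open>K = 2L - 1\<close>, and \<open>trans_mat L\<close> counts the two-step paths between odd heights; the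
  bidiagonal factor records the single steps from odd to even heights.\<close>

definition bidiag_mat :: "nat \<Rightarrow> real mat" where
  "bidiag_mat L = mat L L (\<lambda>(i, j). if j = i \<or> j + 1 = i then 1 else 0)"

definition trans_mat :: "nat \<Rightarrow> real mat" where
  "trans_mat L = bidiag_mat L * transpose_mat (bidiag_mat L)"

lemma bidiag_mat_carrier [simp]: "bidiag_mat L \<in> carrier_mat L L"
  unfolding bidiag_mat_def by simp

lemma trans_mat_carrier [simp]: "trans_mat L \<in> carrier_mat L L"
  unfolding trans_mat_def by (rule mult_carrier_mat[of _ L L]) auto

lemma trans_mat_dim [simp]: "dim_row (trans_mat L) = L" "dim_col (trans_mat L) = L"
  using trans_mat_carrier[of L] unfolding carrier_mat_def by auto

lemma bidiag_mat_mult_index: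
  assumes Y: "Y \<in> carrier_mat L L" and i: "i < L" and j: "j < L"
  shows "(bidiag_mat L * Y) $$ (i, j) = Y $$ (i, j) + (if 1 \<le> i then Y $$ (i - 1, j) else 0)"
proof -
  have "(bidiag_mat L * Y) $$ (i, j)
      = (\<Sum>r<L. (if r = i then Y $$ (r, j) else 0) + (if r + 1 = i then Y $$ (r, j) else 0))"
    by (subst index_mult_mat_sum[OF _ Y i j]) (use i in \<open>auto simp: bidiag_mat_def intro!: sum.cong\<close>)
  also have "\<dots> = Y $$ (i, j) + (if 1 \<le> i then Y $$ (i - 1, j) else 0)"
    using i by (cases i) (simp_all add: sum.distrib sum.delta)
  finally show ?thesis .
qed

lemma transpose_bidiag_mat_mult_index:
  assumes Y: "Y \<in> carrier_mat L L" and i: "i < L" and j: "j < L"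
  shows "(transpose_mat (bidiag_mat L) * Y) $$ (i, j)
       = Y $$ (i, j) + (if i + 1 < L then Y $$ (i + 1, j) else 0)"
proof -
  have "(transpose_mat (bidiag_mat L) * Y) $$ (i, j)
      = (\<Sum>r<L. (if r = i then Y $$ (r, j) else 0) + (if r = i + 1 then Y $$ (r, j) else 0))"
    by (subst index_mult_mat_sum[OF _ Y i j]) (use i in \<open>auto simp: bidiag_mat_def intro!: sum.cong\<close>)
  also have "\<dots> = Y $$ (i, j) + (if i + 1 < L then Y $$ (i + 1, j) else 0)"
    using i by (simp add: sum.distrib sum.delta)
  finally show ?thesis .
qed

lemma trans_mat_mult_index:
  assumes X: "X \<in> carrier_mat L L" and i: "i < L" and j: "j < L"
  shows "(trans_mat L * X) $$ (i, j)
       = (if i + 1 < L then X $$ (i + 1, j) else 0) + (if i = 0 then 1 else 2) * X $$ (i, j)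
         + (if 1 \<le> i then X $$ (i - 1, j) else 0)"
proof -
  have "trans_mat L * X = bidiag_mat L * (transpose_mat (bidiag_mat L) * X)"
    unfolding trans_mat_def by (rule assoc_mult_mat[of _ L L _ L _ L]) (use X in auto)
  moreover have "transpose_mat (bidiag_mat L) * X \<in> carrier_mat L L"
    using X by (intro mult_carrier_mat[of _ L L]) auto
  ultimately show ?thesis
    using X i j by (simp add: bidiag_mat_mult_index transpose_bidiag_mat_mult_index)
qed

lemma transpose_trans_mat: "transpose_mat (trans_mat L) = trans_mat L"
  unfolding trans_mat_def by (subst transpose_mult[of _ L L _ L]) auto

lemma mult_trans_mat_index:
  assumes X: "X \<in> carrier_mat L L" and i: "i < L" and j: "j < L"
  shows "(X * trans_mat L) $$ (i, j)
       = (if j + 1 < L then X $$ (i, j + 1) else 0) + (if j = 0 then 1 else 2) * X $$ (i, j)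
         + (if 1 \<le> j then X $$ (i, j - 1) else 0)"
proof -
  have "X * trans_mat L = transpose_mat (trans_mat L * transpose_mat X)"
    using X by (simp add: transpose_mult[of _ L L] transpose_trans_mat)
  then show ?thesis
    using trans_mat_mult_index[of "transpose_mat X" L j i] X i j by simp
qed

lemma trans_pow_first_row:
  assumes "p < L" "i \<le> p"
  shows "(trans_mat L ^\<^sub>m i) $$ (0, p) = (if i = p then 1 else 0)"
  using assms
proof (induction i arbitrary: p)
  case 0
  then show ?case by simp
next
  case (Suc i)
  have "(trans_mat L ^\<^sub>m Suc i) $$ (0, p)
      = (if p + 1 < L then (trans_mat L ^\<^sub>m i) $$ (0, p + 1) else 0)
        + (if p = 0 then 1 else 2) * (trans_mat L ^\<^sub>m i) $$ (0, p)
        + (if 1 \<le> p then (trans_mat L ^\<^sub>m i) $$ (0, p - 1) else 0)"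
    unfolding pow_mat.simps(2) by (rule mult_trans_mat_index) (use Suc.prems in auto)
  also have "\<dots> = (if Suc i = p then 1 else 0)"
    using Suc.IH[of "p + 1"] Suc.IH[of p] Suc.IH[of "p - 1"] Suc.prems by auto
  finally show ?case .
qed

lemma trans_pow_last_col:
  assumes "p < L" "p + i \<le> L - 1"
  shows "(trans_mat L ^\<^sub>m i) $$ (p, L - 1) = (if p + i = L - 1 then 1 else 0)"
  using assms
proof (induction i arbitrary: p)
  case 0
  then show ?case by simp
next
  case (Suc i)
  have "(trans_mat L ^\<^sub>m Suc i) $$ (p, L - 1)
      = (if p + 1 < L then (trans_mat L ^\<^sub>m i) $$ (p + 1, L - 1) else 0)
        + (if p = 0 then 1 else 2) * (trans_mat L ^\<^sub>m i) $$ (p, L - 1)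
        + (if 1 \<le> p then (trans_mat L ^\<^sub>m i) $$ (p - 1, L - 1) else 0)"
    unfolding pow_mat_Suc_left[OF trans_mat_carrier] by (rule trans_mat_mult_index) (use Suc.prems in auto)
  also have "\<dots> = (if p + Suc i = L - 1 then 1 else 0)"
    using Suc.IH[of "p + 1"] Suc.IH[of p] Suc.IH[of "p - 1"] Suc.prems by auto
  finally show ?case .
qed

lemma det_trans_mat: "det (trans_mat L) = 1"
proof -
  have "det (bidiag_mat L) = 1"
    by (rule det_unit_lower_triangular[of _ L]) (auto simp: bidiag_mat_def)
  then show ?thesis
    unfolding trans_mat_def by (simp add: det_mult[of _ L] det_transpose[OF bidiag_mat_carrier])
qed

lemma det_trans_pow: "det (trans_mat L ^\<^sub>m N) = 1"
  by (induction N) (simp_all add: det_mult[of _ L] det_trans_mat)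

lemma trans_mat_invertible:
  "\<exists>W. W \<in> carrier_mat L L \<and> trans_mat L * W = 1\<^sub>m L \<and> W * trans_mat L = 1\<^sub>m L"
proof -
  have "trans_mat L \<in> Units (ring_mat TYPE(real) L undefined)"
    by (rule det_non_zero_imp_unit) (auto simp: det_trans_mat)
  then show ?thesis unfolding Units_def ring_mat_def by auto
qed

definition trans_inv :: "nat \<Rightarrow> real mat" where
  "trans_inv L = (SOME W. W \<in> carrier_mat L L \<and> trans_mat L * W = 1\<^sub>m L \<and> W * trans_mat L = 1\<^sub>m L)"

lemma trans_inv:
  "trans_inv L \<in> carrier_mat L L" "trans_mat L * trans_inv L = 1\<^sub>m L" "trans_inv L * trans_mat L = 1\<^sub>m L"
  using someI_ex[OF trans_mat_invertible[of L]] unfolding trans_inv_def[symmetric] by auto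

lemma trans_inv_carrier [simp]: "trans_inv L \<in> carrier_mat L L"
  using trans_inv by simp

lemma trans_inv_dim [simp]: "dim_row (trans_inv L) = L" "dim_col (trans_inv L) = L"
  using trans_inv_carrier[of L] unfolding carrier_mat_def by auto

definition trans_zpow :: "nat \<Rightarrow> int \<Rightarrow> real mat" where
  "trans_zpow L s = (if 0 \<le> s then trans_mat L ^\<^sub>m nat s else trans_inv L ^\<^sub>m nat (- s))"

lemma trans_zpow_carrier [simp]: "trans_zpow L s \<in> carrier_mat L L"
  unfolding trans_zpow_def by simp

lemma trans_zpow_dim [simp]: "dim_row (trans_zpow L s) = L" "dim_col (trans_zpow L s) = L"
  using trans_zpow_carrier[of L s] unfolding carrier_mat_def by auto

lemma trans_zpow_of_nat [simp]: "trans_zpow L (int n) = trans_mat L ^\<^sub>m n"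
  unfolding trans_zpow_def by simp

lemma trans_zpow_0 [simp]: "trans_zpow L 0 = 1\<^sub>m L"
  using trans_zpow_of_nat[of L 0] by simp

lemma trans_zpow_neg: "trans_zpow L (- int n) = trans_inv L ^\<^sub>m n"
  unfolding trans_zpow_def by (cases "n = 0") auto

lemma trans_zpow_Suc_right: "trans_zpow L (s + 1) = trans_zpow L s * trans_mat L"
proof (cases "0 \<le> s")
  case True
  then have "nat (s + 1) = Suc (nat s)" by simp
  then show ?thesis using True unfolding trans_zpow_def by simp
next
  case False
  define n where "n = nat (- s - 1)"
  have s: "s = - int (Suc n)" using False n_def by simp
  show ?thesis
  proof (cases n)
    case 0
    then show ?thesis using s trans_inv trans_zpow_neg[of L 1] by simp
  next
    case (Suc n')
    have "trans_zpow L s * trans_mat L = trans_inv L ^\<^sub>m n * (trans_inv L * trans_mat L)"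
      unfolding s trans_zpow_neg pow_mat.simps(2) by (rule assoc_mult_mat[of _ L L _ L _ L]) auto
    also have "\<dots> = trans_zpow L (s + 1)" using s trans_inv trans_zpow_neg[of L n] by simp
    finally show ?thesis by simp
  qed
qed

lemma trans_zpow_Suc_left: "trans_zpow L (s + 1) = trans_mat L * trans_zpow L s"
proof (cases "0 \<le> s")
  case True
  then have "trans_zpow L (s + 1) = trans_mat L ^\<^sub>m Suc (nat s)"
    unfolding trans_zpow_def by (simp add: nat_add_distrib)
  also have "\<dots> = trans_mat L * trans_zpow L s"
    using True unfolding trans_zpow_def by (simp only: pow_mat_Suc_left[OF trans_mat_carrier] if_True)
  finally show ?thesis .
next
  case False
  define n where "n = nat (- s - 1)"
  have s: "s = - int (Suc n)" using False n_def by simp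
  have "trans_mat L * trans_zpow L s = (trans_mat L * trans_inv L) * trans_inv L ^\<^sub>m n"
    unfolding s trans_zpow_neg pow_mat_Suc_left[OF trans_inv_carrier]
    by (rule assoc_mult_mat[symmetric, of _ L L _ L _ L]) auto
  also have "\<dots> = trans_zpow L (s + 1)" using s trans_inv trans_zpow_neg[of L n] by simp
  finally show ?thesis by simp
qed

lemma trans_zpow_add_right: "trans_zpow L (s + int j) = trans_zpow L s * trans_mat L ^\<^sub>m j"
proof (induction j)
  case 0
  then show ?case by simp
next
  case (Suc j)
  have "trans_zpow L (s + int (Suc j)) = (trans_zpow L s * trans_mat L ^\<^sub>m j) * trans_mat L"
    using trans_zpow_Suc_right[of L "s + int j"] Suc by (simp add: algebra_simps)
  also have "\<dots> = trans_zpow L s * (trans_mat L ^\<^sub>m j * trans_mat L)"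
    by (rule assoc_mult_mat[of _ L L _ L _ L]) auto
  finally show ?case by simp
qed

lemma trans_zpow_add_left: "trans_zpow L (s + int j) = trans_mat L ^\<^sub>m j * trans_zpow L s"
proof (induction j)
  case 0
  then show ?case by simp
next
  case (Suc j)
  have "trans_zpow L (s + int (Suc j)) = trans_mat L * (trans_mat L ^\<^sub>m j * trans_zpow L s)"
    using trans_zpow_Suc_left[of L "s + int j"] Suc by (simp add: algebra_simps)
  also have "\<dots> = (trans_mat L * trans_mat L ^\<^sub>m j) * trans_zpow L s"
    by (rule assoc_mult_mat[symmetric, of _ L L _ L _ L]) auto
  finally show ?case unfolding pow_mat_Suc_left[OF trans_mat_carrier] .
qed

section \<open>Extending the path counts to negative lengths\<close>

lemma path_count_Suc_Suc:
  assumes "0 \<le> s" "s \<le> K"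
  shows "path_count K (Suc (Suc N)) r s
       = path_count K N r (s - 2) + (if 1 \<le> s then path_count K N r s else 0)
         + (if s + 1 \<le> K then path_count K N r s else 0) + path_count K N r (s + 2)"
  using assms by (cases "1 \<le> s"; cases "s + 1 \<le> K") (auto simp: path_count_Suc path_count_outside add.commute)

lemma path_count_odd_trans_pow:
  assumes L: "1 \<le> L" and K: "K = 2 * int L - 1" and q: "q < L"
  shows "real (path_count K (Suc (2 * t)) 0 (K - 2 * int q)) = (trans_mat L ^\<^sub>m t) $$ (q, L - 1)"
  using q
proof (induction t arbitrary: q)
  case 0
  have "real (path_count K (Suc 0) 0 (K - 2 * int q)) = (if K - 2 * int q = 1 then 1 else 0)"
    using K 0 by (simp add: path_count_Suc path_count_0)
  also have "\<dots> = (trans_mat L ^\<^sub>m 0) $$ (q, L - 1)" using K 0 L by auto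
  finally show ?case by simp
next
  case (Suc t)
  define s where "s = K - 2 * int q"
  define col where "col x = (trans_mat L ^\<^sub>m t) $$ (x, L - 1)" for x
  have below: "real (path_count K (Suc (2 * t)) 0 (s - 2)) = (if q + 1 < L then col (q + 1) else 0)"
  proof (cases "q + 1 < L")
    case True
    have "s - 2 = K - 2 * int (q + 1)" unfolding s_def by simp
    then show ?thesis using Suc.IH[OF True] True unfolding col_def by presburger
  next
    case False
    then have "s - 2 < 0" using K Suc.prems unfolding s_def by linarith
    then show ?thesis using False by (simp add: path_count_outside)
  qed
  have above: "real (path_count K (Suc (2 * t)) 0 (s + 2)) = (if 1 \<le> q then col (q - 1) else 0)"
  proof (cases "1 \<le> q")
    case True
    have "s + 2 = K - 2 * int (q - 1)" using True unfolding s_def by (simp add: of_nat_diff)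
    moreover have "q - 1 < L" using Suc.prems by simp
    ultimately show ?thesis using Suc.IH[of "q - 1"] True unfolding col_def by presburger
  next
    case False
    then show ?thesis unfolding s_def by (simp add: path_count_outside)
  qed
  have "1 \<le> s" "s \<le> K" using K Suc.prems unfolding s_def by linarith+
  moreover have "s + 1 \<le> K \<longleftrightarrow> 1 \<le> q" unfolding s_def by linarith
  moreover have "Suc (2 * Suc t) = Suc (Suc (Suc (2 * t)))" by simp
  ultimately have "real (path_count K (Suc (2 * Suc t)) 0 s)
      = (if q + 1 < L then col (q + 1) else 0) + (if q = 0 then 1 else 2) * col q
        + (if 1 \<le> q then col (q - 1) else 0)"
    using below above Suc.IH[OF Suc.prems] unfolding col_def s_def
    by (simp add: path_count_Suc_Suc)
  also have "\<dots> = (trans_mat L * trans_mat L ^\<^sub>m t) $$ (q, L - 1)"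
    unfolding col_def using trans_mat_mult_index[of "trans_mat L ^\<^sub>m t" L q "L - 1"] Suc.prems L by simp
  finally show ?case unfolding s_def pow_mat_Suc_left[OF trans_mat_carrier] .
qed

definition trans_corner :: "nat \<Rightarrow> int \<Rightarrow> real" where
  "trans_corner L s = trans_zpow L s $$ (0, L - 1)"

lemma antitriangular_system_solvable_partial:
  fixes b :: "nat \<Rightarrow> nat \<Rightarrow> real"
  assumes b0: "\<And>j p. j < L \<Longrightarrow> p < L \<Longrightarrow> p + j < L - 1 \<Longrightarrow> b j p = 0"
    and b1: "\<And>j. j < L \<Longrightarrow> b j (L - 1 - j) = 1"
    and t: "t \<le> L" and z: "\<And>p. p < L - t \<Longrightarrow> z p = 0"
  shows "\<exists>\<beta>. \<forall>p<L. z p = (\<Sum>j<t. \<beta> j * b j p)"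
  using t z
proof (induction t arbitrary: z)
  case 0
  then show ?case by auto
next
  case (Suc t)
  define a where "a = z (L - 1 - t)"
  have "p < L - t \<Longrightarrow> z p - a * b t p = 0" for p
    using Suc.prems b0[of t p] b1[of t] by (cases "p = L - 1 - t") (auto simp: a_def)
  then obtain \<beta> where \<beta>: "\<forall>p<L. z p - a * b t p = (\<Sum>j<t. \<beta> j * b j p)"
    using Suc.IH[of "\<lambda>p. z p - a * b t p"] Suc.prems by auto
  have "(\<Sum>j<t. (\<beta>(t := a)) j * b j p) = (\<Sum>j<t. \<beta> j * b j p)" for p
    by (rule sum.cong) auto
  then have "\<forall>p<L. z p = (\<Sum>j<Suc t. (\<beta>(t := a)) j * b j p)"
    using \<beta> by (simp add: algebra_simps)
  then show ?case by blast
qed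

lemma antitriangular_system_solvable:
  fixes b :: "nat \<Rightarrow> nat \<Rightarrow> real"
  assumes "\<And>j p. j < L \<Longrightarrow> p < L \<Longrightarrow> p + j < L - 1 \<Longrightarrow> b j p = 0"
    and "\<And>j. j < L \<Longrightarrow> b j (L - 1 - j) = 1"
  shows "\<exists>\<beta>. \<forall>p<L. z p = (\<Sum>j<L. \<beta> j * b j p)"
  using antitriangular_system_solvable_partial[where b = b and L = L and t = L, OF assms] by auto

lemma lin_rec_trans_corner_of_last_col:
  assumes L: "1 \<le> L"
    and \<beta>: "\<And>p. p < L \<Longrightarrow> (trans_mat L ^\<^sub>m L) $$ (p, L - 1)
                          = (\<Sum>j<L. \<beta> j * (trans_mat L ^\<^sub>m j) $$ (p, L - 1))"
  shows "lin_rec L \<beta> (trans_corner L)"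
  unfolding lin_rec_def
proof
  fix s
  define Z where "Z = trans_zpow L s"
  have entry: "trans_corner L (s + int j) = (\<Sum>p<L. Z $$ (0, p) * (trans_mat L ^\<^sub>m j) $$ (p, L - 1))" for j
    unfolding trans_corner_def trans_zpow_add_right Z_def by (rule index_mult_mat_sum) (use L in auto)
  have "trans_corner L (s + int L)
      = (\<Sum>p<L. Z $$ (0, p) * (\<Sum>j<L. \<beta> j * (trans_mat L ^\<^sub>m j) $$ (p, L - 1)))"
    unfolding entry by (rule sum.cong[OF refl]) (simp only: lessThan_iff \<beta>)
  also have "\<dots> = (\<Sum>p<L. \<Sum>j<L. \<beta> j * (Z $$ (0, p) * (trans_mat L ^\<^sub>m j) $$ (p, L - 1)))"
    by (rule sum.cong[OF refl]) (simp add: sum_distrib_left mult.left_commute)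
  also have "\<dots> = (\<Sum>j<L. \<Sum>p<L. \<beta> j * (Z $$ (0, p) * (trans_mat L ^\<^sub>m j) $$ (p, L - 1)))"
    by (rule sum.swap)
  also have "\<dots> = (\<Sum>j<L. \<beta> j * trans_corner L (s + int j))"
    unfolding entry by (simp add: sum_distrib_left)
  finally show "trans_corner L (s + int L) = (\<Sum>j<L. \<beta> j * trans_corner L (s + int j))" .
qed

text \<open>Evaluated at \<open>s = -1\<close>, the recurrence reads \<open>1 = \<beta> 0 \<cdot> trans_corner L (-1)\<close>,
  since the corner entries of \<open>trans_mat L ^ j\<close> vanish for \<open>j < L - 1\<close>.\<close>

lemma lin_rec_trans_corner_lead:
  assumes L: "1 \<le> L" and rec: "lin_rec L \<beta> (trans_corner L)"
  shows "\<beta> 0 \<noteq> 0"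
proof
  assume \<beta>0: "\<beta> 0 = 0"
  have corner: "trans_corner L (-1 + int j) = (if j = L then 1 else 0)" if "0 < j" "j \<le> L" for j
  proof -
    have "-1 + int j = int (j - 1)" using that by simp
    then have "trans_corner L (-1 + int j) = (trans_mat L ^\<^sub>m (j - 1)) $$ (0, L - 1)"
      unfolding trans_corner_def by (simp only: trans_zpow_of_nat)
    then show ?thesis using trans_pow_first_row[of "L - 1" L "j - 1"] that by auto
  qed
  have "(\<Sum>j<L. \<beta> j * trans_corner L (-1 + int j)) = 0"
  proof (rule sum.neutral, rule ballI)
    fix j assume "j \<in> {..<L}"
    then show "\<beta> j * trans_corner L (-1 + int j) = 0" using \<beta>0 corner[of j] by (cases "j = 0") auto
  qed
  moreover have "trans_corner L (-1 + int L) = 1" using corner[of L] L by simp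
  moreover have "trans_corner L (-1 + int L) = (\<Sum>j<L. \<beta> j * trans_corner L (-1 + int j))"
    using rec unfolding lin_rec_def by blast
  ultimately show False by simp
qed

lemma trans_corner_lin_rec:
  assumes L: "1 \<le> L"
  obtains \<beta> where "lin_rec L \<beta> (trans_corner L)" "\<beta> 0 \<noteq> 0"
proof -
  obtain \<beta> where "\<forall>p<L. (trans_mat L ^\<^sub>m L) $$ (p, L - 1)
      = (\<Sum>j<L. \<beta> j * (trans_mat L ^\<^sub>m j) $$ (p, L - 1))"
  proof (atomize_elim, rule antitriangular_system_solvable)
    show "(trans_mat L ^\<^sub>m j) $$ (p, L - 1) = 0" if "j < L" "p < L" "p + j < L - 1" for j p
      using trans_pow_last_col[of p L j] that by simp
    show "(trans_mat L ^\<^sub>m j) $$ (L - 1 - j, L - 1) = 1" if "j < L" for j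
      using trans_pow_last_col[of "L - 1 - j" L j] that by simp
  qed
  then have "lin_rec L \<beta> (trans_corner L)" by (intro lin_rec_trans_corner_of_last_col L) blast
  with lin_rec_trans_corner_lead[OF L] that show ?thesis by blast
qed

lemma lin_rec_interleave_zeros:
  assumes rec: "lin_rec d g c"
  shows "lin_rec (2 * d) (\<lambda>i. if even i then g (i div 2) else 0)
           (\<lambda>N. if even N then 0 else c ((N - 1) div 2))"
proof -
  define g' where "g' i = (if even i then g (i div 2) else 0)" for i
  define c' where "c' N = (if even N then 0 else c ((N - 1) div 2))" for N
  have "c' (N + int (2 * d)) = (\<Sum>i<2 * d. g' i * c' (N + int i))" for N
  proof -
    define s where "s = (N - 1) div 2"
    have "g' i * c' (N + int i) = (if even i then (if even N then 0 else g (i div 2) * c (s + int (i div 2))) else 0)" for i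
    proof (cases "even i")
      case True
      then obtain h where i: "i = 2 * h" by blast
      have "(N + int i - 1) div 2 = s + int h" unfolding s_def i by (simp add: algebra_simps)
      then show ?thesis using i unfolding g'_def c'_def by simp
    qed (simp add: g'_def)
    then have "(\<Sum>i<2 * d. g' i * c' (N + int i)) = (\<Sum>j<d. if even N then 0 else g j * c (s + int j))"
      by (induction d) auto
    also have "\<dots> = (if even N then 0 else c (s + int d))"
      using rec[unfolded lin_rec_def, rule_format, of s] by simp
    also have "\<dots> = c' (N + int (2 * d))"
    proof -
      have "(N + int (2 * d) - 1) div 2 = s + int d" unfolding s_def by (simp add: algebra_simps)
      then show ?thesis unfolding c'_def by simp
    qed
    finally show ?thesis ..
  qed
  then show ?thesis unfolding lin_rec_def g'_def c'_def by blast
qed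

lemma D_eq_trans_corner:
  assumes L: "1 \<le> L"
  shows "D (2 * int L - 1) t = trans_corner L (t + int L - 1)"
proof -
  define K where "K = 2 * int L - 1"
  define c where "c N = (if even N then 0 else trans_corner L ((N - 1) div 2))" for N
  obtain \<beta> where rec: "lin_rec L \<beta> (trans_corner L)" and \<beta>0: "\<beta> 0 \<noteq> 0"
    using trans_corner_lin_rec[OF L] .
  have "C K N 0 K = c N" for N
  proof (rule C_eq_lin_rec_extension)
    show "lin_rec (2 * L) (\<lambda>i. if even i then \<beta> (i div 2) else 0) c"
      unfolding c_def by (rule lin_rec_interleave_zeros[OF rec])
    show "c (int n) = real (path_count K n 0 K)" for n
    proof (cases "even n")
      case True
      then have "odd (int n + K)" unfolding K_def by simp
      then show ?thesis using True unfolding c_def by (simp add: path_count_parity)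
    next
      case False
      then obtain t where n: "n = Suc (2 * t)" by (metis oddE Suc_eq_plus1)
      then have "(int n - 1) div 2 = int t" by simp
      then show ?thesis
        using n path_count_odd_trans_pow[OF L K_def, of 0 t] L unfolding c_def trans_corner_def by simp
    qed
  qed (use L \<beta>0 in auto)
  moreover have "c (2 * t + K) = trans_corner L (t + int L - 1)"
    unfolding c_def K_def by simp
  ultimately show ?thesis unfolding D_def K_def by simp
qed

section \<open>Minors of powers of the transfer matrix\<close>

lemma sum_lessThan_tail:
  assumes b: "b \<le> (L::nat)" and zero: "\<And>r. r < L - b \<Longrightarrow> f r = 0"
  shows "(\<Sum>r<L. f r) = (\<Sum>q<b. f (L - b + q))"
proof -
  have "(\<Sum>r<L. f r) = (\<Sum>r\<in>{L - b..<L}. f r)"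
    by (rule sum.mono_neutral_right) (auto simp: zero)
  also have "\<dots> = (\<Sum>q<b. f (L - b + q))"
    by (rule sum.reindex_bij_witness[of _ "\<lambda>q. L - b + q" "\<lambda>r. r - (L - b)"]) (use b in auto)
  finally show ?thesis .
qed

text \<open>Only the top-right \<open>b \<times> b\<close> block of \<open>X\<close> contributes, because the first row of
  \<open>trans_mat L ^ i\<close> and the last column of \<open>trans_mat L ^ c\<close> are supported near the corner.\<close>

lemma trans_pow_sandwich_index:
  assumes X: "X \<in> carrier_mat L L" and b: "b \<le> L" and i: "i < b" and c: "c < b"
  shows "(trans_mat L ^\<^sub>m i * X * trans_mat L ^\<^sub>m c) $$ (0, L - 1)
       = (\<Sum>q<b. (\<Sum>p<b. (trans_mat L ^\<^sub>m i) $$ (0, p) * X $$ (p, L - b + q))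
                   * (trans_mat L ^\<^sub>m c) $$ (L - b + q, L - 1))"
proof -
  have L: "0 < L" using b i by simp
  have first_row: "(\<Sum>p<L. (trans_mat L ^\<^sub>m i) $$ (0, p) * X $$ (p, r))
      = (\<Sum>p<b. (trans_mat L ^\<^sub>m i) $$ (0, p) * X $$ (p, r))" for r
    by (rule sum.mono_neutral_right) (use b i trans_pow_first_row[of _ L i] in auto)
  have "(trans_mat L ^\<^sub>m i * X * trans_mat L ^\<^sub>m c) $$ (0, L - 1)
      = (\<Sum>r<L. (trans_mat L ^\<^sub>m i * X) $$ (0, r) * (trans_mat L ^\<^sub>m c) $$ (r, L - 1))"
    by (rule index_mult_mat_sum[of _ L L]) (use X L in auto)
  also have "\<dots> = (\<Sum>r<L. (\<Sum>p<L. (trans_mat L ^\<^sub>m i) $$ (0, p) * X $$ (p, r)) * (trans_mat L ^\<^sub>m c) $$ (r, L - 1))"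
    by (rule sum.cong[OF refl], subst index_mult_mat_sum[of _ L L _ L]) (use X L in auto)
  also have "\<dots> = (\<Sum>q<b. (\<Sum>p<L. (trans_mat L ^\<^sub>m i) $$ (0, p) * X $$ (p, L - b + q))
                           * (trans_mat L ^\<^sub>m c) $$ (L - b + q, L - 1))"
  proof (rule sum_lessThan_tail[OF b])
    fix r assume r: "r < L - b"
    then have "(trans_mat L ^\<^sub>m c) $$ (r, L - 1) = 0" using trans_pow_last_col[of r L c] c by auto
    then show "(\<Sum>p<L. (trans_mat L ^\<^sub>m i) $$ (0, p) * X $$ (p, r)) * (trans_mat L ^\<^sub>m c) $$ (r, L - 1) = 0"
      by simp
  qed
  finally show ?thesis unfolding first_row .
qed

lemma det_trans_pow_sandwich:
  assumes X: "X \<in> carrier_mat L L" and b: "b \<le> L"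
  shows "det (mat b b (\<lambda>(i, j). (trans_mat L ^\<^sub>m i * X * trans_mat L ^\<^sub>m (b - 1 - j)) $$ (0, L - 1)))
       = det (mat b b (\<lambda>(p, q). X $$ (p, L - b + q)))"
proof -
  define A where "A = mat b b (\<lambda>(i, p). (trans_mat L ^\<^sub>m i) $$ (0, p))"
  define Xb where "Xb = mat b b (\<lambda>(p, q). X $$ (p, L - b + q))"
  define B where "B = mat b b (\<lambda>(q, j). (trans_mat L ^\<^sub>m (b - 1 - j)) $$ (L - b + q, L - 1))"
  have cA: "A \<in> carrier_mat b b" and cX: "Xb \<in> carrier_mat b b" and cB: "B \<in> carrier_mat b b"
    unfolding A_def Xb_def B_def by auto
  have "mat b b (\<lambda>(i, j). (trans_mat L ^\<^sub>m i * X * trans_mat L ^\<^sub>m (b - 1 - j)) $$ (0, L - 1))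
      = A * Xb * B" (is "?M = _")
  proof (rule eq_matI)
    fix i j assume "i < dim_row (A * Xb * B)" "j < dim_col (A * Xb * B)"
    then have i: "i < b" and j: "j < b" using cA cB by auto
    have "(A * Xb * B) $$ (i, j) = (\<Sum>q<b. (A * Xb) $$ (i, q) * B $$ (q, j))"
      by (rule index_mult_mat_sum[of _ b b]) (use cA cX cB i j in auto)
    also have "\<dots> = (\<Sum>q<b. (\<Sum>p<b. A $$ (i, p) * Xb $$ (p, q)) * B $$ (q, j))"
      by (rule sum.cong[OF refl], subst index_mult_mat_sum[of _ b b _ b]) (use cA cX i in auto)
    also have "\<dots> = (\<Sum>q<b. (\<Sum>p<b. (trans_mat L ^\<^sub>m i) $$ (0, p) * X $$ (p, L - b + q))
                             * (trans_mat L ^\<^sub>m (b - 1 - j)) $$ (L - b + q, L - 1))"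
      using i j by (auto simp: A_def Xb_def B_def intro!: sum.cong)
    also have "\<dots> = (trans_mat L ^\<^sub>m i * X * trans_mat L ^\<^sub>m (b - 1 - j)) $$ (0, L - 1)"
      by (rule trans_pow_sandwich_index[symmetric]) (use X b i j in auto)
    finally show "?M $$ (i, j) = (A * Xb * B) $$ (i, j)" using i j by simp
  qed (use cA cB in auto)
  moreover have "det A = 1"
    by (rule det_unit_lower_triangular[OF cA]) (use b trans_pow_first_row[of _ L] in \<open>auto simp: A_def\<close>)
  moreover have "det B = 1"
  proof (rule det_unit_lower_triangular[OF cB])
    fix q j assume "q < j" "j < b"
    then show "B $$ (q, j) = 0"
      unfolding B_def using trans_pow_last_col[of "L - b + q" L "b - 1 - j"] b by auto
  next
    fix q assume "q < b"
    then show "B $$ (q, q) = 1"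
      unfolding B_def using trans_pow_last_col[of "L - b + q" L "b - 1 - q"] b by auto
  qed
  ultimately show ?thesis using det_mult[OF mult_carrier_mat[OF cA cX] cB] det_mult[OF cA cX]
    unfolding Xb_def by simp
qed

section \<open>Jacobi's complementary minor identity\<close>

lemma mult_splice_inverse_cols:
  fixes H Y :: "'a :: comm_ring_1 mat"
  assumes H: "H \<in> carrier_mat (k + m) (k + m)" and Y: "Y \<in> carrier_mat (k + m) (k + m)"
    and HY: "H * Y = 1\<^sub>m (k + m)"
  shows "H * mat (k + m) (k + m) (\<lambda>(r, c). if c < m then Y $$ (r, k + c) else if r = c then 1 else 0)
       = mat (k + m) (k + m) (\<lambda>(r, c). if c < m then (if r = k + c then 1 else 0) else H $$ (r, c))"
    (is "H * ?Z = ?HZ")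
proof (rule eq_matI)
  fix r c assume "r < dim_row ?HZ" "c < dim_col ?HZ"
  then have r: "r < k + m" and c: "c < k + m" by auto
  have "(H * ?Z) $$ (r, c) = (\<Sum>p<k + m. H $$ (r, p) * ?Z $$ (p, c))"
    by (rule index_mult_mat_sum[OF H _ r c]) simp
  also have "\<dots> = ?HZ $$ (r, c)"
  proof (cases "c < m")
    case True
    have "(\<Sum>p<k + m. H $$ (r, p) * ?Z $$ (p, c)) = (\<Sum>p<k + m. H $$ (r, p) * Y $$ (p, k + c))"
      by (rule sum.cong) (use True c in auto)
    also have "\<dots> = (H * Y) $$ (r, k + c)"
      by (rule index_mult_mat_sum[symmetric]) (use H Y r c True in auto)
    finally show ?thesis using HY r c True by simp
  next
    case False
    have "(\<Sum>p<k + m. H $$ (r, p) * ?Z $$ (p, c)) = (\<Sum>p<k + m. if p = c then H $$ (r, p) else 0)"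
      by (rule sum.cong) (use False c in auto)
    then show ?thesis using False r c by (simp add: sum.delta)
  qed
  finally show "(H * ?Z) $$ (r, c) = ?HZ $$ (r, c)" .
qed (use H in auto)

text \<open>Multiplying \<open>H\<close> by the identity matrix whose first \<open>m\<close> columns are replaced by the
  last \<open>m\<close> columns of \<open>Y = H\<^sup>-\<^sup>1\<close> produces unit vectors there; both sides are then
  block triangular up to a cyclic shift of the columns.\<close>

lemma det_complementary_minor:
  fixes H Y :: "'a :: idom mat"
  assumes H: "H \<in> carrier_mat (k + m) (k + m)" and Y: "Y \<in> carrier_mat (k + m) (k + m)"
    and HY: "H * Y = 1\<^sub>m (k + m)" and det_H: "det H = 1"
  shows "det (mat k k (\<lambda>(i, j). H $$ (i, m + j)))
       = (-1) ^ (k * m) * det (mat m m (\<lambda>(i, j). Y $$ (i, k + j)))"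
proof -
  define Yb where "Yb = mat m m (\<lambda>(i, j). Y $$ (i, k + j))"
  define Hb where "Hb = mat k k (\<lambda>(i, j). H $$ (i, m + j))"
  define Z where "Z = mat (k + m) (k + m) (\<lambda>(r, c). if c < m then Y $$ (r, k + c) else if r = c then 1 else 0)"
  have Z: "Z \<in> carrier_mat (k + m) (k + m)" unfolding Z_def by simp
  have "Z = four_block_mat Yb (0\<^sub>m m k) (mat k m (\<lambda>(r, c). Y $$ (m + r, k + c))) (1\<^sub>m k)"
    unfolding Z_def Yb_def by (rule eq_matI) auto
  then have "det Z = det Yb"
    by (simp add: det_four_block_mat_upper_right_zero[of _ m _ k] Yb_def)
  then have "det Yb = det (H * Z)" using det_mult[OF H Z] det_H by simp
  also have "\<dots> = (-1) ^ (k * m) * det (mat (k + m) (k + m) (\<lambda>(i, j). (H * Z) $$ (i, if j < k then j + m else j - k)))"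
    by (rule det_swap_cols) (use H Z in simp)
  also have "mat (k + m) (k + m) (\<lambda>(i, j). (H * Z) $$ (i, if j < k then j + m else j - k))
      = four_block_mat Hb (0\<^sub>m k m) (mat m k (\<lambda>(r, c). H $$ (k + r, m + c))) (1\<^sub>m m)"
    unfolding Z_def mult_splice_inverse_cols[OF H Y HY] Hb_def by (rule eq_matI) (auto simp: add.commute)
  also have "det \<dots> = det Hb"
    by (simp add: det_four_block_mat_upper_right_zero[of _ k _ m] Hb_def)
  finally have "(-1) ^ (k * m) * det Yb = ((-1) ^ (k * m) * (-1) ^ (k * m)) * det Hb" by simp
  also have "(-1) ^ (k * m) * (-1) ^ (k * m) = (1 :: 'a)" by (simp flip: power_add mult_2)
  finally show ?thesis unfolding Hb_def Yb_def by simp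
qed

lemma trans_zpow_inverse: "trans_zpow L (int N) * trans_zpow L (- int N) = 1\<^sub>m L"
  using trans_zpow_add_left[of L "- int N" N] by simp

lemma det_trans_corner_toeplitz:
  assumes bc: "b + c = L"
  shows "det (mat b b (\<lambda>(i, j). trans_corner L (s + int b - 1 + int i - int j)))
       = det (mat b b (\<lambda>(p, q). trans_zpow L s $$ (p, c + q)))"
proof -
  define Z where "Z = trans_zpow L s"
  have Z: "Z \<in> carrier_mat L L" unfolding Z_def by simp
  have "mat b b (\<lambda>(i, j). trans_corner L (s + int b - 1 + int i - int j))
      = mat b b (\<lambda>(i, j). (trans_mat L ^\<^sub>m i * Z * trans_mat L ^\<^sub>m (b - 1 - j)) $$ (0, L - 1))"
    (is "?A = ?B")
  proof (rule eq_matI)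
    fix i j assume "i < dim_row ?B" "j < dim_col ?B"
    then have i: "i < b" and j: "j < b" by auto
    have shift: "s + int b - 1 + int i - int j = (s + int (b - 1 - j)) + int i"
      using j by (simp add: of_nat_diff)
    have "trans_zpow L (s + int b - 1 + int i - int j) = trans_mat L ^\<^sub>m i * (Z * trans_mat L ^\<^sub>m (b - 1 - j))"
      unfolding shift trans_zpow_add_left[where j = i] Z_def by (simp only: trans_zpow_add_right)
    also have "\<dots> = trans_mat L ^\<^sub>m i * Z * trans_mat L ^\<^sub>m (b - 1 - j)"
      by (rule assoc_mult_mat[symmetric, of _ L L _ L _ L]) (use Z in auto)
    finally show "?A $$ (i, j) = ?B $$ (i, j)" using i j by (simp add: trans_corner_def)
  qed auto
  also have "det \<dots> = det (mat b b (\<lambda>(p, q). Z $$ (p, L - b + q)))"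
    by (rule det_trans_pow_sandwich[OF Z]) (use bc in simp)
  also have "L - b = c" using bc by simp
  finally show ?thesis unfolding Z_def .
qed

theorem theorem18:
  fixes n k m :: nat
  assumes "0 < k" and "0 < m"
  shows "det (mat k k (\<lambda>(i, j). D (2 * int k + 2 * int m - 1) (int n + int j - int i)))
       = (-1) ^ (k * m) *
         det (mat m m (\<lambda>(i, j). D (2 * int k + 2 * int m - 1)
                                  (- int n - int j + int i - int k - int m)))"
proof -
  define L where "L = k + m"
  have L: "1 \<le> L" using assms unfolding L_def by simp
  have D: "D (2 * int k + 2 * int m - 1) t = trans_corner L (t + int L - 1)" for t
    using D_eq_trans_corner[OF L, of t] unfolding L_def by (simp add: algebra_simps)
  define H where "H = trans_zpow L (int (n + m))"
  define Y where "Y = trans_zpow L (- int (n + m))"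
  have "det (mat k k (\<lambda>(i, j). D (2 * int k + 2 * int m - 1) (int n + int j - int i)))
      = det (transpose_mat (mat k k (\<lambda>(i, j). D (2 * int k + 2 * int m - 1) (int n + int j - int i))))"
    by (rule det_transpose[symmetric, of _ k]) simp
  also have "\<dots> = det (mat k k (\<lambda>(i, j). trans_corner L (int (n + m) + int k - 1 + int i - int j)))"
    by (rule arg_cong[where f = det], rule eq_matI) (auto simp: D L_def intro!: arg_cong[where f = "trans_corner _"])
  also have "\<dots> = det (mat k k (\<lambda>(i, j). H $$ (i, m + j)))"
    unfolding H_def by (rule det_trans_corner_toeplitz) (simp add: L_def)
  also have "\<dots> = (-1) ^ (k * m) * det (mat m m (\<lambda>(i, j). Y $$ (i, k + j)))"
    by (rule det_complementary_minor)
       (use trans_zpow_inverse[of L "n + m"] det_trans_pow[of L "n + m", folded trans_zpow_of_nat] in \<open>simp_all add: H_def Y_def L_def\<close>)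
  also have "det (mat m m (\<lambda>(i, j). Y $$ (i, k + j)))
      = det (mat m m (\<lambda>(i, j). trans_corner L (- int (n + m) + int m - 1 + int i - int j)))"
    unfolding Y_def by (rule det_trans_corner_toeplitz[symmetric]) (simp add: L_def)
  also have "mat m m (\<lambda>(i, j). trans_corner L (- int (n + m) + int m - 1 + int i - int j))
      = mat m m (\<lambda>(i, j). D (2 * int k + 2 * int m - 1) (- int n - int j + int i - int k - int m))"
    by (rule eq_matI) (auto simp: D L_def intro!: arg_cong[where f = "trans_corner _"])
  finally show ?thesis .
qed

end
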